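(* Consider the mixed-integer bilevel problem $$\min_{x,y}\ c_1^\top x+d_1^\top y\quad\text{s.t.}\quad A_1x+B_1y\le b_1,\qquad y\in\arg\min_{z}\{c_2^\top x+d_2^\top z:\ A_2x+B_2z\le b_2\},$$ with $x\in\mathbb{R}^{n_x}$, lower-level variables $z=(z_C,z_I)$ with $z_C\in\mathbb{R}^{n_{yC}}$ continuous and $z_I\in\{0,1\}^{n_{yI}}$ binary, $A_2\in\mathbb{R}^{m_2\times n_x}$, and $B_2=[B_{2C},B_{2I}]$ split by columns according to $(z_C,z_I)$. For a binary vector $\hat y_I\in\{0,1\}^{n_{yI}}$ and an index set $\mathcal{A}\subseteq\{1,\dots,m_2\}$ with $|\mathcal{A}|=n_{yC}$ such that the row-submatrix $B_{2C,\mathcal{A}}$ is invertible, define the affine map $$y_C^{\hat y_I,\mathcal{A}}(x)=B_{2C,\mathcal{A}}^{-1}\big(b_{2,\mathcal{A}}-B_{2I,\mathcal{A}}\hat y_I-A_{2,\mathcal{A}}x\big)$$ and the critical region $$CR(\hat y_I,\mathcal{A})=\{x\in\mathbb{R}^{n_x}:\ A_2x+B_{2C}\,y_C^{\hat y_I,\mathcal{A}}(x)+B_{2I}\hat y_I\le b_2\}.$$ Consider the following iteration (Parametric Region Search), started from some $x_0\in\mathbb{R}^{n_x}$ and without an iteration cap. At iteration $k=0,1,2,\dots$: (1) compute an optimal solution $y_k=(y_{C,k},\hat y_{I,k})$ of the lower-level problem $\min_z\{d_2^\top z: A_2x_k+B_2z\le b_2\}$ at $x=x_k$ and record it; (2)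 if $x_k\in CR_i$ for some $i\in\{0,\dots,k-1\}$, stop; (3) otherwise choose an index set $\mathcal{A}_k$ with $|\mathcal{A}_k|=n_{yC}$, $B_{2C,\mathcal{A}_k}$ invertible, such that the constraints indexed by $\mathcal{A}_k$ are active at $(x_k,y_k)$ and $y_{C,k}=y_C^{\hat y_{I,k},\mathcal{A}_k}(x_k)$, and set $CR_k=CR(\hat y_{I,k},\mathcal{A}_k)$; (4) let $x_{k+1}$ be any point of $CR_k$ (in the method, a minimizer of the upper-level objective with $y$ replaced by $(y_C^{\hat y_{I,k},\mathcal{A}_k}(x),\hat y_{I,k})$ over $x\in CR_k$ subject to the upper-level constraints), and continue with $k+1$. Assume that at every iteration the lower-level problem at $x_k$ has an optimal solution, that an index set $\mathcal{A}_k$ as in (3) exists, and that the point $x_{k+1}$ in (4) exists. Then $x_k\in CR_k$ for each $k$ at which step (3) is executed, the generated critical regions correspond to pairwise distinct pairs $(\hat y_{I,k},\mathcal{A}_k)$, and consequently the iteration stops after at most $2^{n_{yI}}\binom{m_2}{n_{yC}}+1$ iterations.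
   Context: Notation: for a matrix $M$ and index set $\mathcal{A}$ of rows, $M_{\mathcal{A}}$ denotes the submatrix formed by the rows indexed by $\mathcal{A}$; similarly $b_{2,\mathcal{A}}$ is the subvector of $b_2$. A constraint $i$ of the lower level is active at $(x,z)$ if $(A_2x+B_2z)_i=(b_2)_i$. All inequalities between vectors are componentwise. The lower-level integer variables are assumed binary. *)

theory Defs
  imports "Jordan_Normal_Form.Matrix" "Jordan_Normal_Form.DL_Submatrix"
begin

definition vec_le :: "real vec \<Rightarrow> real vec \<Rightarrow> bool" where
  "vec_le u v \<longleftrightarrow> dim_vec u = dim_vec v \<and> (\<forall>i<dim_vec v. u $ i \<le> v $ i)"

definition row_sub :: "real mat \<Rightarrow> nat set \<Rightarrow> real mat" where
  "row_sub M A = submatrix M A UNIV"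

definition sub_vec :: "real vec \<Rightarrow> nat set \<Rightarrow> real vec" where
  "sub_vec v A = vec (card {i. i < dim_vec v \<and> i \<in> A}) (\<lambda>i. v $ pick A i)"

definition mat_inv :: "real mat \<Rightarrow> real mat" where
  "mat_inv M = (SOME N. inverts_mat M N \<and> inverts_mat N M)"

definition binary_vec :: "nat \<Rightarrow> real vec \<Rightarrow> bool" where
  "binary_vec n v \<longleftrightarrow> v \<in> carrier_vec n \<and> (\<forall>i<n. v $ i = 0 \<or> v $ i = 1)"

definition yC_map :: "real mat \<Rightarrow> real mat \<Rightarrow> real mat \<Rightarrow> real vec \<Rightarrow> real vec \<Rightarrow> nat set \<Rightarrow> real vec \<Rightarrow> real vec" where
  "yC_map A2 B2C B2I b2 yI A x =
     mat_inv (row_sub B2C A) *\<^sub>v (sub_vec b2 A - row_sub B2I A *\<^sub>v yI - row_sub A2 A *\<^sub>v x)"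

definition crit_region :: "nat \<Rightarrow> real mat \<Rightarrow> real mat \<Rightarrow> real mat \<Rightarrow> real vec \<Rightarrow> real vec \<Rightarrow> nat set \<Rightarrow> real vec set" where
  "crit_region nx A2 B2C B2I b2 yI A =
     {x \<in> carrier_vec nx. vec_le (A2 *\<^sub>v x + B2C *\<^sub>v yC_map A2 B2C B2I b2 yI A x + B2I *\<^sub>v yI) b2}"

text \<open>Lower-level feasibility and optimality (objective d2^T z; the term c2^T x is constant in z).\<close>
definition ll_feasible :: "nat \<Rightarrow> nat \<Rightarrow> real mat \<Rightarrow> real mat \<Rightarrow> real mat \<Rightarrow> real vec \<Rightarrow> real vec \<Rightarrow> real vec \<Rightarrow> real vec \<Rightarrow> bool" where
  "ll_feasible nyC nyI A2 B2C B2I b2 x zC zI \<longleftrightarrow>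
     zC \<in> carrier_vec nyC \<and> binary_vec nyI zI \<and> vec_le (A2 *\<^sub>v x + B2C *\<^sub>v zC + B2I *\<^sub>v zI) b2"

definition ll_optimal :: "nat \<Rightarrow> nat \<Rightarrow> real mat \<Rightarrow> real mat \<Rightarrow> real mat \<Rightarrow> real vec \<Rightarrow> real vec \<Rightarrow> real vec \<Rightarrow> real vec \<Rightarrow> real vec \<Rightarrow> real vec \<Rightarrow> bool" where
  "ll_optimal nyC nyI A2 B2C B2I b2 d2C d2I x zC zI \<longleftrightarrow>
     ll_feasible nyC nyI A2 B2C B2I b2 x zC zI \<and>
     (\<forall>zC' zI'. ll_feasible nyC nyI A2 B2C B2I b2 x zC' zI' \<longrightarrow>
        d2C \<bullet> zC + d2I \<bullet> zI \<le> d2C \<bullet> zC' + d2I \<bullet> zI')"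

definition admissible_index_set :: "nat \<Rightarrow> nat \<Rightarrow> real mat \<Rightarrow> real mat \<Rightarrow> real mat \<Rightarrow> real vec \<Rightarrow> real vec \<Rightarrow> real vec \<Rightarrow> real vec \<Rightarrow> nat set \<Rightarrow> bool" where
  "admissible_index_set m2 nyC A2 B2C B2I b2 x yC yI A \<longleftrightarrow>
     A \<subseteq> {0..<m2} \<and> card A = nyC \<and> invertible_mat (row_sub B2C A) \<and>
     (\<forall>i\<in>A. (A2 *\<^sub>v x + B2C *\<^sub>v yC + B2I *\<^sub>v yI) $ i = b2 $ i) \<and>
     yC = yC_map A2 B2C B2I b2 yI A x"

end

theory Submission
  imports Defs
begin

text \<open>At every iteration that does not stop, the lower-level solution is feasible and
  the chosen active set reproduces its continuous part, so \<open>x\<^sub>k\<close> lies in its own critical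
  region \<open>CR\<^sub>k\<close>. A later non-stopping iterate \<open>x\<^sub>k\<^sub>'\<close> lies in \<open>CR\<^sub>k\<^sub>'\<close> but in no earlier region,
  hence its pair \<open>(y\<^sub>I, \<A>)\<close> differs from all earlier ones. These pairs range over binary
  vectors and \<open>n\<^sub>y\<^sub>C\<close>-subsets of the \<open>m\<^sub>2\<close> lower-level constraints, so by pigeonhole the
  iteration stops after at most \<open>2^n\<^sub>y\<^sub>I (m\<^sub>2 choose n\<^sub>y\<^sub>C) + 1\<close> iterations.\<close>

lemma finite_card_binary_vecs:
  "finite {v. binary_vec n v} \<and> card {v. binary_vec n v} \<le> 2 ^ n"
proof -
  let ?L = "{xs :: real list. set xs \<subseteq> {0, 1} \<and> length xs = n}"
  have inj: "inj_on list_of_vec {v. binary_vec n v}"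
    by (metis inj_onI vec_list)
  have into: "list_of_vec ` {v. binary_vec n v} \<subseteq> ?L"
    by (auto simp: binary_vec_def set_list_of_vec vec_set_def)
  have fin: "finite ?L" and card: "card ?L = 2 ^ n"
    by (simp_all add: finite_lists_length_eq card_lists_length_eq numeral_2_eq_2)
  show ?thesis
    using inj_on_finite[OF inj into fin] card_inj_on_le[OF inj into fin] card by simp
qed

lemma finite_card_binary_index_pairs:
  fixes n m k :: nat
  defines "S \<equiv> {v. binary_vec n v} \<times> {A. A \<subseteq> {0..<m} \<and> card A = k}"
  shows "finite S \<and> card S \<le> 2 ^ n * (m choose k)"
proof -
  have "finite {A. A \<subseteq> {0..<m} \<and> card A = k}"
    by (rule finite_subset[of _ "Pow {0..<m}"]) auto
  moreover have "card {A. A \<subseteq> {0..<m} \<and> card A = k} = m choose k"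
    using n_subsets[of "{0..<m}" k] by simp
  ultimately show ?thesis
    using finite_card_binary_vecs[of n] unfolding S_def card_cartesian_product by simp
qed

lemma first_stop_le_card_labels:
  fixes stop :: "nat \<Rightarrow> bool" and lab :: "nat \<Rightarrow> 'l"
  assumes "finite S" "card S \<le> N"
    and lab_in: "\<And>k. \<forall>j<k. \<not> stop j \<Longrightarrow> \<not> stop k \<Longrightarrow> lab k \<in> S"
    and lab_new: "\<And>k k'. k < k' \<Longrightarrow> \<forall>j<k'. \<not> stop j \<Longrightarrow> \<not> stop k' \<Longrightarrow> lab k \<noteq> lab k'"
  shows "\<exists>K\<le>N. (\<forall>j<K. \<not> stop j) \<and> stop K"
proof -
  have "\<exists>K\<le>N. stop K"
  proof (rule ccontr)
    assume "\<not> (\<exists>K\<le>N. stop K)"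
    then have running: "\<And>k. k \<le> N \<Longrightarrow> \<not> stop k" by blast
    have "inj_on lab {0..N}"
    proof (rule linorder_inj_onI)
      fix k k' assume "k < k'" "k' \<in> {0..N}"
      then show "lab k \<noteq> lab k'"
        using lab_new running by simp
    qed auto
    moreover have "lab ` {0..N} \<subseteq> S"
      using lab_in running by auto
    ultimately have "card {0..N} \<le> card S"
      using card_inj_on_le \<open>finite S\<close> by blast
    then show False using \<open>card S \<le> N\<close> by simp
  qed
  then obtain K where "K \<le> N" "stop K" by blast
  then show ?thesis
    using ex_least_nat_le[of stop K] by (blast intro: order.trans)
qed

lemma ll_feasible_if_optimal:
  "ll_optimal nyC nyI A2 B2C B2I b2 d2C d2I x zC zI \<Longrightarrow> ll_feasible nyC nyI A2 B2C B2I b2 x zC zI"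
  unfolding ll_optimal_def by simp

lemma mem_crit_region_if_admissible:
  assumes "x \<in> carrier_vec nx"
    and "ll_feasible nyC nyI A2 B2C B2I b2 x yC yI"
    and "admissible_index_set m2 nyC A2 B2C B2I b2 x yC yI A"
  shows "x \<in> crit_region nx A2 B2C B2I b2 yI A"
  using assms unfolding crit_region_def ll_feasible_def admissible_index_set_def by simp

theorem mainTheorem1:
  fixes nx m2 nyC nyI :: nat
    and A2 B2C B2I :: "real mat" and b2 d2C d2I :: "real vec"
    and x yC yI :: "nat \<Rightarrow> real vec" and AS :: "nat \<Rightarrow> nat set"
  defines "CR \<equiv> (\<lambda>k. crit_region nx A2 B2C B2I b2 (yI k) (AS k))"
  defines "stops \<equiv> (\<lambda>k. \<exists>i<k. x k \<in> CR i)"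
  defines "reached \<equiv> (\<lambda>k. \<forall>j<k. \<not> stops j)"
  assumes dims: "A2 \<in> carrier_mat m2 nx" "B2C \<in> carrier_mat m2 nyC" "B2I \<in> carrier_mat m2 nyI"
      "b2 \<in> carrier_vec m2" "d2C \<in> carrier_vec nyC" "d2I \<in> carrier_vec nyI"
    and x0: "x 0 \<in> carrier_vec nx"
    and step1: "\<And>k. reached k \<Longrightarrow> ll_optimal nyC nyI A2 B2C B2I b2 d2C d2I (x k) (yC k) (yI k)"
    and step3: "\<And>k. reached k \<Longrightarrow> \<not> stops k \<Longrightarrow>
                  admissible_index_set m2 nyC A2 B2C B2I b2 (x k) (yC k) (yI k) (AS k)"
    and step4: "\<And>k. reached k \<Longrightarrow> \<not> stops k \<Longrightarrow> x (Suc k) \<in> CR k"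
  shows "(\<forall>k. reached k \<and> \<not> stops k \<longrightarrow> x k \<in> CR k)
    \<and> (\<forall>k k'. reached k \<and> \<not> stops k \<and> reached k' \<and> \<not> stops k' \<and> k \<noteq> k'
              \<longrightarrow> (yI k, AS k) \<noteq> (yI k', AS k'))
    \<and> (\<exists>K \<le> 2 ^ nyI * (m2 choose nyC). reached K \<and> stops K)"
proof -
  have carrier: "x k \<in> carrier_vec nx" if "reached k" for k
  proof (cases k)
    case (Suc j)
    then have "x k \<in> CR j" using step4 that unfolding reached_def by simp
    then show ?thesis unfolding CR_def crit_region_def by simp
  qed (use x0 in simp)
  have in_own_region: "x k \<in> CR k" if "reached k" "\<not> stops k" for k
    unfolding CR_def
    using mem_crit_region_if_admissible[OF carrier[OF that(1)]
        ll_feasible_if_optimal[OF step1[OF that(1)]] step3[OF that]] .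
  have new_pair: "(yI k, AS k) \<noteq> (yI k', AS k')" if "k < k'" "reached k'" "\<not> stops k'" for k k'
    using in_own_region[of k'] that unfolding stops_def CR_def by auto
  have "\<exists>K \<le> 2 ^ nyI * (m2 choose nyC). reached K \<and> stops K"
    unfolding reached_def
  proof (rule first_stop_le_card_labels[OF finite_card_binary_index_pairs[THEN conjunct1]
        finite_card_binary_index_pairs[THEN conjunct2]])
    show "(yI k, AS k) \<in> {v. binary_vec nyI v} \<times> {A. A \<subseteq> {0..<m2} \<and> card A = nyC}"
      if "\<forall>j<k. \<not> stops j" "\<not> stops k" for k
      using ll_feasible_if_optimal[OF step1[of k]] step3[of k] that
      unfolding reached_def ll_feasible_def admissible_index_set_def by simp
  next
    show "(yI k, AS k) \<noteq> (yI k', AS k')"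
      if "k < k'" "\<forall>j<k'. \<not> stops j" "\<not> stops k'" for k k'
      using new_pair that unfolding reached_def by blast
  qed
  moreover have "(yI k, AS k) \<noteq> (yI k', AS k')"
    if "reached k" "\<not> stops k" "reached k'" "\<not> stops k'" "k \<noteq> k'" for k k'
    using new_pair[of k k'] new_pair[of k' k] that by (cases "k < k'") auto
  ultimately show ?thesis
    using in_own_region by blast
qed

end
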